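(* Let $\mathcal{X} \subseteq \mathbb{R}^n$ and let $d$ be a distance (metric) on $\mathcal{X}$. Let $\mathcal{P} = \{(x_i, y_i)\}_{i=1}^N$ be a finite labeled training set with $x_i \in \mathcal{X}$, which is linearly separable, and let $L$ be the max-margin linear classifier trained on $\mathcal{P}$. Let $\epsilon > 0$ and suppose that for any two data points $x_i, x_j$ of $\mathcal{P}$, $d(x_i, x_j) > 2\epsilon$ whenever $y_i \neq y_j$. Let $b$ be the nearest-neighbor binarizer $b(x) \in \arg\min_{z \in \mathcal{P}} d(x,z)$ (where $z$ ranges over the data points $x_1,\dots,x_N$), and define the augmented classifier $C(x) = L(b(x))$. Then $C$ is robust over $\mathcal{P}$ with respect to $\epsilon$, and $C$ is exact on the $\epsilon$-neighborhoods of the points of $\mathcal{P}$, i.e. for every $i$ and every $z \in B(x_i,\epsilon)$, $C(z) = y_i$.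
   Context: For $x \in \mathcal{X}$ and $\epsilon>0$, $B(x,\epsilon) = \{z \in \mathcal{X} : d(x,z) \le \epsilon\}$. A function $F$ defined on $\mathcal{X}$ is robust over a subset $\mathcal{Q} \subseteq \mathcal{X}$ with respect to $\epsilon>0$ if for all $x \in \mathcal{Q}$ and all $z \in B(x,\epsilon)$, $F(z) = F(x)$. "Exact" means no classification errors. *)

theory Defs
  imports "HOL-Analysis.Analysis"
begin

definition linearly_separable :: "(nat \<Rightarrow> 'a::euclidean_space) \<Rightarrow> (nat \<Rightarrow> real) \<Rightarrow> nat \<Rightarrow> bool" where
  "linearly_separable x y N \<longleftrightarrow> (\<exists>w c. \<forall>i<N. y i * (inner w (x i) + c) > 0)"

definition svm_feasible :: "(nat \<Rightarrow> 'a::euclidean_space) \<Rightarrow> (nat \<Rightarrow> real) \<Rightarrow> nat \<Rightarrow> 'a \<Rightarrow> real \<Rightarrow> bool" where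
  "svm_feasible x y N w c \<longleftrightarrow> (\<forall>i<N. y i * (inner w (x i) + c) \<ge> 1)"

definition max_margin_classifier :: "(nat \<Rightarrow> 'a::euclidean_space) \<Rightarrow> (nat \<Rightarrow> real) \<Rightarrow> nat \<Rightarrow> ('a \<Rightarrow> real) \<Rightarrow> bool" where
  "max_margin_classifier x y N L \<longleftrightarrow>
     (\<exists>w c. svm_feasible x y N w c \<and>
            (\<forall>w' c'. svm_feasible x y N w' c' \<longrightarrow> norm w \<le> norm w') \<and>
            L = (\<lambda>v. sgn (inner w v + c)))"

definition nn_binarizer :: "'a set \<Rightarrow> ('a \<Rightarrow> 'a \<Rightarrow> real) \<Rightarrow> (nat \<Rightarrow> 'a) \<Rightarrow> nat \<Rightarrow> ('a \<Rightarrow> 'a) \<Rightarrow> bool" where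
  "nn_binarizer X d x N b \<longleftrightarrow>
     (\<forall>v\<in>X. (\<exists>i<N. b v = x i) \<and> (\<forall>j<N. d v (b v) \<le> d v (x j)))"

definition robust_over :: "'a set \<Rightarrow> ('a \<Rightarrow> 'a \<Rightarrow> real) \<Rightarrow> ('a \<Rightarrow> 'b) \<Rightarrow> 'a set \<Rightarrow> real \<Rightarrow> bool" where
  "robust_over X d F Q e \<longleftrightarrow> (\<forall>q\<in>Q. \<forall>z\<in>Metric_space.mcball X d q e. F z = F q)"

end

theory Submission
  imports Defs
begin

text \<open>Every feasible SVM hyperplane, in particular the max-margin one, classifies the training
  points correctly. A point within \<open>\<epsilon>\<close> of \<open>x i\<close> has its nearest training point within
  \<open>2\<epsilon>\<close> of \<open>x i\<close>, which by the separation hypothesis must carry the label \<open>y i\<close>; so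
  \<open>L \<circ> b\<close> is constantly \<open>y i\<close> on the ball, which gives both exactness and robustness.\<close>

lemma max_margin_classifier_label:
  assumes "max_margin_classifier x y N L" and "i < N" and "y i \<in> {-1, 1}"
  shows "L (x i) = y i"
proof -
  obtain w c where "svm_feasible x y N w c" and L: "L = (\<lambda>v. sgn (inner w v + c))"
    using assms(1) unfolding max_margin_classifier_def by blast
  then have "y i * (inner w (x i) + c) \<ge> 1"
    using assms(2) unfolding svm_feasible_def by blast
  with assms(3) show ?thesis
    unfolding L by (auto simp: sgn_if)
qed

lemma (in Metric_space) nearest_point_in_double_ball:
  assumes "z \<in> mcball q e" and "p \<in> M" and "d z p \<le> d z q"
  shows "d q p \<le> 2 * e"
proof -
  have "q \<in> M" "z \<in> M" "d q z \<le> e"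
    using assms(1) by auto
  moreover have "d z p \<le> d q z"
    using assms(3) commute by simp
  ultimately show ?thesis
    using triangle[of q z p] assms(2) by linarith
qed

lemma nn_binarizer_label:
  assumes "Metric_space X d" and "\<forall>i<N. x i \<in> X"
    and "\<forall>i<N. \<forall>j<N. y i \<noteq> y j \<longrightarrow> d (x i) (x j) > 2 * \<epsilon>"
    and "nn_binarizer X d x N b"
    and "i < N" and "z \<in> Metric_space.mcball X d (x i) \<epsilon>"
  obtains j where "j < N" and "b z = x j" and "y j = y i"
proof -
  interpret Metric_space X d by fact
  obtain j where j: "j < N" "b z = x j" and nearest: "\<forall>k<N. d z (b z) \<le> d z (x k)"
    using assms(4,6) unfolding nn_binarizer_def by auto
  have "d (x i) (x j) \<le> 2 * \<epsilon>"
    using nearest_point_in_double_ball[OF assms(6)] nearest assms(2,5) j by auto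
  with assms(3,5) j have "y j = y i" by force
  with j show thesis by (rule that)
qed

theorem theorem1:
  fixes X :: "(real ^ 'n) set" and d :: "real ^ 'n \<Rightarrow> real ^ 'n \<Rightarrow> real"
    and x :: "nat \<Rightarrow> real ^ 'n" and y :: "nat \<Rightarrow> real" and N :: nat
    and L :: "real ^ 'n \<Rightarrow> real" and b :: "real ^ 'n \<Rightarrow> real ^ 'n" and \<epsilon> :: real
  assumes "Metric_space X d"
    and "\<forall>i<N. x i \<in> X"
    and "\<forall>i<N. y i \<in> {-1, 1}"
    and "linearly_separable x y N"
    and "max_margin_classifier x y N L"
    and "\<epsilon> > 0"
    and "\<forall>i<N. \<forall>j<N. y i \<noteq> y j \<longrightarrow> d (x i) (x j) > 2 * \<epsilon>"
    and "nn_binarizer X d x N b"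
  shows "robust_over X d (\<lambda>v. L (b v)) (x ` {..<N}) \<epsilon>
    \<and> (\<forall>i<N. \<forall>z\<in>Metric_space.mcball X d (x i) \<epsilon>. L (b z) = y i)"
proof -
  interpret Metric_space X d by fact
  have exact: "L (b z) = y i" if i: "i < N" and z: "z \<in> mcball (x i) \<epsilon>" for i z
  proof -
    obtain j where "j < N" "b z = x j" "y j = y i"
      by (rule nn_binarizer_label[OF assms(1,2,7,8) i z])
    then show ?thesis
      using max_margin_classifier_label[OF assms(5)] assms(3) by metis
  qed
  moreover have "x i \<in> mcball (x i) \<epsilon>" if "i < N" for i
    using assms(2,6) that by auto
  ultimately have "robust_over X d (\<lambda>v. L (b v)) (x ` {..<N}) \<epsilon>"
    unfolding robust_over_def by fastforce
  with exact show ?thesis by blast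
qed

end
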